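(* Let $T\in(\mathbb{C}^n)^{\otimes3}$ be an $r$-diagonalisable symmetric tensor with slices $T_1,\dots,T_n$, and let $T^{(a)}=\sum_{i=1}^na_iT_i$ be a linear combination of the slices of rank $r$ such that $\kappa_F(T^{(a)})<k_F$ (with $k_F>0$). Let $\tilde A=2k_FT^{(a)}(T^{(a)})^*$ and let $\sigma_1\ge\dots\ge\sigma_r$ be its $r$ nonzero eigenvalues. Then $\sigma_r\ge 2/r$.
   Context: $T$ is $r$-diagonalisable if $T=\sum_{i=1}^ru_i^{\otimes3}$ with $u_1,\dots,u_r\in\mathbb{C}^n$ linearly independent. The $k$-th slice of $T$ is $T_k=(T_{ijk})_{i,j}$. For a matrix $M$, $\kappa_F(M)=\|M\|_F^2+\|M^\dagger\|_F^2$ with $M^\dagger$ the Moore–Penrose pseudoinverse. *)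

theory Defs
  imports "HOL-Analysis.Analysis"
begin

type_synonym 'n tensor3 = "'n \<Rightarrow> 'n \<Rightarrow> 'n \<Rightarrow> complex"

definition sym_tensor :: "'n tensor3 \<Rightarrow> bool" where
  "sym_tensor T \<longleftrightarrow> (\<forall>i j k. T i j k = T j i k \<and> T i j k = T i k j)"

definition r_diagonalisable :: "nat \<Rightarrow> ('n::finite) tensor3 \<Rightarrow> bool" where
  "r_diagonalisable r T \<longleftrightarrow>
     (\<exists>u :: nat \<Rightarrow> complex^'n.
        inj_on u {..<r} \<and> vec.independent (u ` {..<r}) \<and>
        (\<forall>i j k. T i j k = (\<Sum>l<r. u l $ i * u l $ j * u l $ k)))"

definition slice :: "('n::finite) tensor3 \<Rightarrow> 'n \<Rightarrow> complex^'n^'n" where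
  "slice T k = (\<chi> i j. T i j k)"

definition slice_comb :: "('n::finite) tensor3 \<Rightarrow> complex^'n \<Rightarrow> complex^'n^'n" where
  "slice_comb T a = (\<Sum>k\<in>UNIV. (\<chi> i j. a $ k * slice T k $ i $ j))"

definition cadjoint :: "complex^'n^'m \<Rightarrow> complex^'m^'n" where
  "cadjoint M = (\<chi> i j. cnj (M $ j $ i))"

definition is_pinv :: "complex^'n^'m \<Rightarrow> complex^'m^'n \<Rightarrow> bool" where
  "is_pinv M X \<longleftrightarrow> M ** X ** M = M \<and> X ** M ** X = X \<and>
     cadjoint (M ** X) = M ** X \<and> cadjoint (X ** M) = X ** M"

text \<open>Moore--Penrose pseudoinverse (exists and is unique for every complex matrix).\<close>
definition pinv :: "complex^'n^'m \<Rightarrow> complex^'m^'n" where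
  "pinv M = (THE X. is_pinv M X)"

definition frob_sq :: "complex^'n^'m \<Rightarrow> real" where
  "frob_sq M = (\<Sum>i\<in>UNIV. \<Sum>j\<in>UNIV. (cmod (M $ i $ j))^2)"

definition kappa_F :: "complex^'n^'m \<Rightarrow> real" where
  "kappa_F M = frob_sq M + frob_sq (pinv M)"

definition is_eigenvalue :: "complex^'n^'n \<Rightarrow> complex \<Rightarrow> bool" where
  "is_eigenvalue A \<sigma> \<longleftrightarrow> (\<exists>v. v \<noteq> 0 \<and> A *v v = \<sigma> *s v)"

end

theory Submission
  imports Defs
begin

(* Write M = T^(a) and X = M^+. If M M^* v = mu v with v and mu nonzero, then w = M^* v has
   |w|^2 = mu |v|^2, so mu > 0, and X v = w / mu because X M M^* = M^*. Hence
   mu |v|^2 = |w|^2 <= mu^2 |X|_F^2 |v|^2, so 1 <= mu |X|_F^2 < mu k_F and sigma = 2 k_F mu > 2.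

   The real work is showing that pinv, a definite description, denotes the Moore-Penrose
   inverse. For existence let H = M^* M. The real spans
   of {H^k | k >= j} form a descending chain of finite-dimensional spaces, so some H^j lies in the
   span of the higher powers: Q H^(j+1) = H^j with Q a real polynomial in H, hence Hermitian and
   commuting with H. As P A^* A = R A^* A implies P A^* = R A^*, the powers of H cancel down to
   Q H M^* = M^*, and X = Q M^* is a pseudoinverse. *)

lemma cadjoint_cadjoint [simp]: "cadjoint (cadjoint A) = A"
  by (simp add: cadjoint_def vec_eq_iff)

lemma cadjoint_mult: "cadjoint (A ** B) = cadjoint B ** cadjoint A"
  by (simp add: cadjoint_def vec_eq_iff matrix_matrix_mult_def mult.commute)

lemma cadjoint_add: "cadjoint (A + B) = cadjoint A + cadjoint B"
  by (simp add: cadjoint_def vec_eq_iff)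

lemma cadjoint_diff: "cadjoint (A - B) = cadjoint A - cadjoint B"
  by (simp add: cadjoint_def vec_eq_iff)

lemma cadjoint_scaleR: "cadjoint (c *\<^sub>R A) = c *\<^sub>R cadjoint A"
  by (simp add: cadjoint_def vec_eq_iff complex_cnj_scaleR)

lemma cadjoint_zero [simp]: "cadjoint 0 = 0"
  by (simp add: cadjoint_def vec_eq_iff)

lemma cadjoint_mat_1 [simp]: "cadjoint (mat 1 :: complex^'n^'n) = mat 1"
  by (simp add: cadjoint_def vec_eq_iff mat_def)

lemma matrix_add_rdistrib: "(A + B) ** C = A ** C + B ** (C :: 'a::semiring_1^'n^'m)"
  by (simp add: vec_eq_iff matrix_matrix_mult_def distrib_right sum.distrib)

lemma matrix_diff_ldistrib: "C ** (A - B) = C ** A - C ** (B :: 'a::ring_1^'n^'m)"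
  by (simp add: vec_eq_iff matrix_matrix_mult_def right_diff_distrib sum_subtractf)

lemma matrix_diff_rdistrib: "(A - B) ** C = A ** C - B ** (C :: 'a::ring_1^'n^'m)"
  by (simp add: vec_eq_iff matrix_matrix_mult_def left_diff_distrib sum_subtractf)

lemma matrix_scaleR_right: "A ** (c *\<^sub>R B) = c *\<^sub>R (A ** (B :: complex^'n^'m))"
  by (simp add: vec_eq_iff matrix_matrix_mult_def scaleR_sum_right)

lemma norm_vec_power2: "(norm x)\<^sup>2 = (\<Sum>i\<in>UNIV. (norm (x $ i))\<^sup>2)"
  by (simp add: norm_vec_def L2_set_def sum_nonneg)

lemma frob_sq_eq_norm_power2: "frob_sq M = (norm M)\<^sup>2"
  by (simp add: frob_sq_def norm_vec_power2)

lemma mult_cadjoint_diag: "(A ** cadjoint A) $ i $ i = of_real ((norm (A $ i))\<^sup>2)"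
  by (simp add: matrix_matrix_mult_def cadjoint_def norm_vec_power2 complex_mult_cnj cmod_power2)

lemma mult_cadjoint_self_eq_0: "A ** cadjoint A = 0 \<Longrightarrow> A = 0"
  using mult_cadjoint_diag[of A] by (simp add: vec_eq_iff)

lemma mult_gram_right_cancel:
  fixes M :: "complex^'n^'m" and P R :: "complex^'n^'k"
  assumes "P ** cadjoint M ** M = R ** cadjoint M ** M"
  shows "P ** cadjoint M = R ** cadjoint M"
proof -
  let ?D = "(P - R) ** cadjoint M"
  have "?D ** cadjoint ?D = (P ** cadjoint M ** M - R ** cadjoint M ** M) ** cadjoint (P - R)"
    by (simp add: cadjoint_mult cadjoint_diff matrix_mul_assoc matrix_diff_rdistrib matrix_diff_ldistrib)
  also have "\<dots> = 0" using assms by simp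
  finally have "?D = 0" by (rule mult_cadjoint_self_eq_0)
  then show ?thesis by (simp add: matrix_diff_rdistrib)
qed

fun matpow :: "'a::semiring_1^'n^'n \<Rightarrow> nat \<Rightarrow> 'a^'n^'n" where
  "matpow H 0 = mat 1"
| "matpow H (Suc k) = matpow H k ** H"

lemma matpow_commute: "matpow H k ** H = H ** matpow H k"
  by (induction k) (simp_all add: matrix_mul_assoc[symmetric])

lemma matpow_add: "matpow H (a + b) = matpow H a ** matpow H b"
  by (induction b) (simp_all add: matrix_mul_assoc)

lemma cadjoint_matpow: "cadjoint H = H \<Longrightarrow> cadjoint (matpow H k) = matpow H k"
  by (induction k) (simp_all add: cadjoint_mult matpow_commute)

lemma hermitian_matpow_right_cancel:
  fixes H :: "complex^'n^'n"
  assumes herm: "cadjoint H = H"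
  shows "P ** matpow H k ** H = R ** matpow H k ** H \<Longrightarrow> P ** H = R ** H"
proof (induction k arbitrary: P R)
  case 0
  then show ?case by simp
next
  case (Suc k)
  have "(P ** matpow H k) ** cadjoint H ** H = (R ** matpow H k) ** cadjoint H ** H"
    using Suc.prems herm by (simp add: matrix_mul_assoc)
  then have "(P ** matpow H k) ** cadjoint H = (R ** matpow H k) ** cadjoint H"
    by (rule mult_gram_right_cancel)
  then have "P ** matpow H k ** H = R ** matpow H k ** H"
    using herm by simp
  then show ?case
    by (rule Suc.IH)
qed

lemma matpow_in_span_higher_powers:
  fixes H :: "complex^'n^'n"
  shows "\<exists>j. matpow H j \<in> span (matpow H ` {Suc j..})"
proof (rule ccontr)
  define W where "W j = span (matpow H ` {j..})" for j
  assume "\<nexists>j. matpow H j \<in> span (matpow H ` {Suc j..})"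
  then have new_power: "matpow H j \<notin> span (matpow H ` {Suc j..})" for j
    by blast
  have step: "dim (W j) = dim (W (Suc j)) + 1" for j
  proof -
    have "{j..} = insert j {Suc j..}"
      by auto
    then have "dim (W j) = dim (insert (matpow H j) (matpow H ` {Suc j..}))"
      unfolding W_def dim_span by (simp only: image_insert)
    also have "\<dots> = dim (W (Suc j)) + 1"
      using new_power[of j] unfolding W_def dim_span dim_insert by (simp only: if_False)
    finally show ?thesis .
  qed
  have "dim (W 0) = dim (W j) + j" for j
  proof (induction j)
    case (Suc j)
    then show ?case
      using step[of j] by linarith
  qed simp
  from this[of "Suc DIM(complex^'n^'n)"] have "dim (W 0) > DIM(complex^'n^'n)"
    by linarith
  then show False
    using dim_subset_UNIV[of "W 0"] by simp
qed

lemma matpow_right_inverse_in_span: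
  fixes H :: "complex^'n^'n"
  obtains j Q where "Q \<in> span (range (matpow H))" "Q ** matpow H (Suc j) = matpow H j"
proof -
  obtain j where j: "matpow H j \<in> span (matpow H ` {Suc j..})"
    using matpow_in_span_higher_powers by blast
  have "matpow H (Suc j + k) = matpow H k ** matpow H (Suc j)" for k
    by (metis add.commute matpow_add)
  then have "matpow H ` {Suc j..} = (\<lambda>Q. Q ** matpow H (Suc j)) ` range (matpow H)"
    using image_add_atLeast[of "Suc j" 0, symmetric] by (simp only: add_0_right atLeast_0 image_image)
  moreover have "linear (\<lambda>Q :: complex^'n^'n. Q ** matpow H (Suc j))"
    by (rule linearI) (simp_all add: matrix_add_rdistrib scalar_matrix_assoc)
  ultimately have "span (matpow H ` {Suc j..}) = (\<lambda>Q. Q ** matpow H (Suc j)) ` span (range (matpow H))"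
    by (simp add: span_linear_image)
  with j obtain Q where "matpow H j = Q ** matpow H (Suc j)" "Q \<in> span (range (matpow H))"
    by (auto elim: imageE)
  then show thesis
    using that[of Q j] by (simp del: matpow.simps)
qed

lemma span_matpow_hermitian_commuting:
  fixes H :: "complex^'n^'n"
  assumes "cadjoint H = H" and "Q \<in> span (range (matpow H))"
  shows "cadjoint Q = Q \<and> Q ** H = H ** Q"
  using assms(2)
proof (induction rule: span_induct)
  case base
  show ?case
    by (simp add: subspace_def cadjoint_add cadjoint_scaleR matrix_add_rdistrib matrix_add_ldistrib
        scalar_matrix_assoc[symmetric] matrix_scaleR_right)
next
  case (step Q)
  then show ?case
    by (auto simp: cadjoint_matpow[OF assms(1)] matpow_commute)
qed

lemma is_pinv_exists: "\<exists>X. is_pinv M X"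
proof -
  define H where "H = cadjoint M ** M"
  have herm: "cadjoint H = H"
    by (simp add: H_def cadjoint_mult)
  obtain j Q where Q: "Q \<in> span (range (matpow H))" and Qj: "Q ** matpow H (Suc j) = matpow H j"
    by (rule matpow_right_inverse_in_span)
  have Qadj: "cadjoint Q = Q" and QH: "Q ** H = H ** Q"
    using span_matpow_hermitian_commuting[OF herm Q] by auto
  have "(Q ** H) ** matpow H j ** H = mat 1 ** matpow H j ** H"
    using Qj by (simp add: matrix_mul_assoc[symmetric] matpow_commute)
  then have "(Q ** H) ** H = mat 1 ** H"
    by (rule hermitian_matpow_right_cancel[OF herm])
  then have "(Q ** H) ** cadjoint M ** M = mat 1 ** cadjoint M ** M"
    by (simp add: H_def matrix_mul_assoc)
  then have "Q ** H ** cadjoint M = mat 1 ** cadjoint M"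
    by (rule mult_gram_right_cancel)
  then have QHM: "Q ** H ** cadjoint M = cadjoint M"
    by simp
  have "cadjoint (Q ** H ** cadjoint M) = M ** H ** Q"
    by (simp add: cadjoint_mult herm Qadj matrix_mul_assoc)
  with QHM have MHQ: "M ** H ** Q = M"
    by simp
  have "is_pinv M (Q ** cadjoint M)"
    unfolding is_pinv_def
  proof (intro conjI)
    have "M ** (Q ** cadjoint M) ** M = M ** (Q ** H)"
      by (simp add: H_def matrix_mul_assoc)
    also have "\<dots> = M"
      using MHQ by (simp add: QH matrix_mul_assoc)
    finally show "M ** (Q ** cadjoint M) ** M = M" .
    have "Q ** cadjoint M ** M ** (Q ** cadjoint M) = Q ** (H ** Q) ** cadjoint M"
      by (simp add: H_def matrix_mul_assoc)
    also have "\<dots> = Q ** (Q ** H ** cadjoint M)"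
      by (simp only: QH[symmetric] matrix_mul_assoc)
    finally show "Q ** cadjoint M ** M ** (Q ** cadjoint M) = Q ** cadjoint M"
      using QHM by simp
    show "cadjoint (M ** (Q ** cadjoint M)) = M ** (Q ** cadjoint M)"
      by (simp add: cadjoint_mult Qadj matrix_mul_assoc)
    show "cadjoint (Q ** cadjoint M ** M) = Q ** cadjoint M ** M"
      using QH by (simp add: H_def[symmetric] matrix_mul_assoc[symmetric] cadjoint_mult Qadj herm)
  qed
  then show ?thesis ..
qed

lemma is_pinv_unique:
  assumes X: "is_pinv M X" and Y: "is_pinv M Y"
  shows "X = Y"
proof -
  from X have x1: "M ** X ** M = M" and x2: "X ** M ** X = X"
    and x3: "cadjoint (M ** X) = M ** X" and x4: "cadjoint (X ** M) = X ** M"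
    unfolding is_pinv_def by auto
  from Y have y1: "M ** Y ** M = M" and y2: "Y ** M ** Y = Y"
    and y3: "cadjoint (M ** Y) = M ** Y" and y4: "cadjoint (Y ** M) = Y ** M"
    unfolding is_pinv_def by auto
  have MX: "cadjoint (M ** X) = cadjoint (M ** X) ** cadjoint (M ** Y)"
  proof -
    have "cadjoint (M ** X) ** cadjoint (M ** Y) = cadjoint ((M ** Y ** M) ** X)"
      by (simp add: cadjoint_mult matrix_mul_assoc)
    then show ?thesis
      using y1 by simp
  qed
  have YM: "cadjoint (Y ** M) = cadjoint (X ** M) ** cadjoint (Y ** M)"
  proof -
    have "cadjoint (X ** M) ** cadjoint (Y ** M) = cadjoint (Y ** (M ** X ** M))"
      by (simp add: cadjoint_mult matrix_mul_assoc)
    then show ?thesis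
      using x1 by simp
  qed
  have "X = X ** cadjoint (M ** X)"
    using x2 x3 by (simp add: matrix_mul_assoc)
  also have "\<dots> = X ** cadjoint (M ** X) ** cadjoint (M ** Y)"
    by (subst MX) (simp add: matrix_mul_assoc)
  also have "\<dots> = X ** M ** Y"
    using x2 x3 y3 by (simp add: matrix_mul_assoc)
  finally have XMY: "X = X ** M ** Y" .
  have "Y = cadjoint (Y ** M) ** Y"
    using y2 y4 by simp
  also have "\<dots> = cadjoint (X ** M) ** cadjoint (Y ** M) ** Y"
    by (subst YM) (rule refl)
  also have "\<dots> = X ** M ** Y"
    using x4 y4 y2 by (simp add: matrix_mul_assoc[symmetric])
  finally show ?thesis
    using XMY by simp
qed

lemma is_pinv_pinv: "is_pinv M (pinv M)"
  unfolding pinv_def using is_pinv_exists is_pinv_unique by (metis theI)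

lemma pinv_mult_gram: "pinv M ** (M ** cadjoint M) = cadjoint M"
proof -
  have MXM: "M ** pinv M ** M = M" and XM: "cadjoint (pinv M ** M) = pinv M ** M"
    using is_pinv_pinv[of M] unfolding is_pinv_def by auto
  have "pinv M ** (M ** cadjoint M) = cadjoint (M ** (pinv M ** M))"
    using XM by (simp add: cadjoint_mult matrix_mul_assoc)
  also have "\<dots> = cadjoint M"
    using MXM by (simp add: matrix_mul_assoc)
  finally show ?thesis .
qed

definition cinner :: "complex^'n \<Rightarrow> complex^'n \<Rightarrow> complex" where
  "cinner x y = (\<Sum>i\<in>UNIV. cnj (x $ i) * y $ i)"

lemma cinner_self: "cinner x x = of_real ((norm x)\<^sup>2)"
  unfolding cinner_def norm_vec_power2 of_real_sum
  by (rule sum.cong) (simp_all add: mult.commute complex_mult_cnj cmod_power2)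

lemma cinner_scale_right: "cinner x (c *s y) = c * cinner x y"
  by (simp add: cinner_def sum_distrib_left mult.left_commute)

lemma cinner_matrix_vector_right: "cinner x (A *v y) = cinner (cadjoint A *v x) y"
proof -
  have "cinner x (A *v y) = (\<Sum>i\<in>UNIV. \<Sum>j\<in>UNIV. cnj (x $ i) * A $ i $ j * y $ j)"
    by (simp add: cinner_def matrix_vector_mult_def sum_distrib_left mult.assoc)
  also have "\<dots> = (\<Sum>j\<in>UNIV. \<Sum>i\<in>UNIV. cnj (x $ i) * A $ i $ j * y $ j)"
    by (rule sum.swap)
  also have "\<dots> = cinner (cadjoint A *v x) y"
    by (simp add: cinner_def matrix_vector_mult_def cadjoint_def sum_distrib_left sum_distrib_right
        mult.commute mult.left_commute)
  finally show ?thesis .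
qed

lemma norm_matrix_vector_le:
  fixes X :: "'a::real_normed_algebra_1^'n^'m"
  shows "norm (X *v v) \<le> norm X * norm v"
proof -
  have "norm ((X *v v) $ i) \<le> norm (X $ i) * norm v" for i
  proof -
    have "norm ((X *v v) $ i) \<le> (\<Sum>j\<in>UNIV. norm (X $ i $ j) * norm (v $ j))"
      unfolding matrix_vector_mult_def vec_lambda_beta
      by (rule order_trans[OF norm_sum sum_mono]) (rule norm_mult_ineq)
    also have "\<dots> \<le> norm (X $ i) * norm v"
      using L2_set_mult_ineq[where f = "\<lambda>j. norm (X $ i $ j)" and g = "\<lambda>j. norm (v $ j)" and A = UNIV]
      by (simp add: norm_vec_def)
    finally show ?thesis .
  qed
  then have "norm (X *v v) \<le> L2_set (\<lambda>i. norm (X $ i) * norm v) UNIV"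
    unfolding norm_vec_def[of "X *v v"] by (rule L2_set_mono) simp
  also have "\<dots> = norm X * norm v"
    by (simp add: L2_set_left_distrib norm_vec_def)
  finally show ?thesis .
qed

lemma frob_sq_pinv_le_kappa_F: "frob_sq (pinv M) \<le> kappa_F M"
  by (simp add: kappa_F_def frob_sq_eq_norm_power2)

lemma norm_vector_smult: "norm (c *s x) = norm c * norm (x :: 'a::real_normed_field^'n)"
  by (simp add: norm_vec_def L2_set_right_distrib norm_mult)

lemma is_eigenvalue_scaleR:
  assumes "c \<noteq> 0" and "is_eigenvalue (c *\<^sub>R A) \<sigma>"
  shows "is_eigenvalue A (\<sigma> / of_real c)"
proof -
  obtain v where "v \<noteq> 0" and "(c *\<^sub>R A) *v v = \<sigma> *s v"
    using assms(2) unfolding is_eigenvalue_def by blast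
  moreover have "(c *\<^sub>R A) *v v = of_real c *s (A *v v)"
    by (simp add: vec_eq_iff matrix_vector_mult_def scaleR_conv_of_real[where 'a = complex]
        sum_distrib_left mult.assoc)
  ultimately have "A *v v = (\<sigma> / of_real c) *s v"
    using assms(1) by (simp add: vec_eq_iff field_simps)
  with \<open>v \<noteq> 0\<close> show ?thesis
    unfolding is_eigenvalue_def by blast
qed

lemma gram_nonzero_eigenvalue_ge_inverse_frob_sq_pinv:
  fixes M :: "complex^'n^'m"
  assumes "is_eigenvalue (M ** cadjoint M) \<mu>" and "\<mu> \<noteq> 0"
  shows "\<exists>l > 0. \<mu> = of_real l \<and> 1 \<le> l * frob_sq (pinv M)"
proof -
  obtain v where "v \<noteq> 0" and eigen: "(M ** cadjoint M) *v v = \<mu> *s v"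
    using assms(1) unfolding is_eigenvalue_def by blast
  define w where "w = cadjoint M *v v"
  have Mw: "M *v w = \<mu> *s v"
    using eigen by (simp add: w_def matrix_vector_mul_assoc)
  have "w \<noteq> 0"
  proof
    assume "w = 0"
    then have "\<mu> *s v = 0"
      using Mw by simp
    then show False
      using \<open>v \<noteq> 0\<close> \<open>\<mu> \<noteq> 0\<close> by (auto simp: vec_eq_iff)
  qed
  have "of_real ((norm w)\<^sup>2) = cinner v (M *v w)"
    by (simp add: w_def cinner_self cinner_matrix_vector_right)
  also have "\<dots> = \<mu> * of_real ((norm v)\<^sup>2)"
    by (simp add: Mw cinner_scale_right cinner_self)
  finally have norm_w_complex: "of_real ((norm w)\<^sup>2) = \<mu> * of_real ((norm v)\<^sup>2)" .
  define l where "l = (norm w)\<^sup>2 / (norm v)\<^sup>2"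
  have l_pos: "l > 0"
    using \<open>v \<noteq> 0\<close> \<open>w \<noteq> 0\<close> by (simp add: l_def)
  have norm_w: "(norm w)\<^sup>2 = l * (norm v)\<^sup>2"
    using \<open>v \<noteq> 0\<close> by (simp add: l_def)
  have \<mu>: "\<mu> = of_real l"
    using norm_w_complex \<open>v \<noteq> 0\<close> by (simp add: l_def field_simps)
  have "\<mu> *s (pinv M *v v) = pinv M *v (M *v w)"
    by (simp add: Mw vector_scalar_commute)
  also have "\<dots> = w"
    by (simp add: w_def matrix_vector_mul_assoc pinv_mult_gram)
  finally have "norm w = l * norm (pinv M *v v)"
    using l_pos by (auto simp: \<mu> norm_vector_smult)
  also have "\<dots> \<le> l * (norm (pinv M) * norm v)"
    using l_pos by (simp add: norm_matrix_vector_le)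
  finally have "l * (norm v)\<^sup>2 \<le> (l * norm (pinv M) * norm v)\<^sup>2"
    by (metis norm_w norm_ge_zero power_mono mult.assoc)
  then have "1 \<le> l * frob_sq (pinv M)"
    using l_pos \<open>v \<noteq> 0\<close> by (simp add: frob_sq_eq_norm_power2 power2_eq_square field_simps)
  with l_pos \<mu> show ?thesis
    by blast
qed

theorem lemma4p15:
  fixes T :: "('n::finite) tensor3" and r :: nat and a :: "complex^'n" and kF :: real
  assumes "sym_tensor T"
    and "r_diagonalisable r T"
    and "rank (slice_comb T a) = r"
    and "kF > 0"
    and "kappa_F (slice_comb T a) < kF"
  shows "\<forall>\<sigma>. \<sigma> \<noteq> 0 \<and>
           is_eigenvalue (\<chi> i j. complex_of_real (2 * kF) *
              (slice_comb T a ** cadjoint (slice_comb T a)) $ i $ j) \<sigma>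
         \<longrightarrow> \<sigma> \<in> \<real> \<and> 2 / real r \<le> Re \<sigma>"
proof (intro allI impI, elim conjE)
  fix \<sigma> :: complex
  define M where "M = slice_comb T a"
  assume "\<sigma> \<noteq> 0" and "is_eigenvalue (\<chi> i j. complex_of_real (2 * kF) *
              (slice_comb T a ** cadjoint (slice_comb T a)) $ i $ j) \<sigma>"
  moreover have "(\<chi> i j. complex_of_real (2 * kF) * (M ** cadjoint M) $ i $ j) = (2 * kF) *\<^sub>R (M ** cadjoint M)"
    by (simp add: vec_eq_iff scaleR_conv_of_real[where 'a = complex])
  ultimately have "is_eigenvalue (M ** cadjoint M) (\<sigma> / of_real (2 * kF))"
    using \<open>kF > 0\<close> is_eigenvalue_scaleR[of "2 * kF" "M ** cadjoint M" \<sigma>] by (simp add: M_def)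
  then obtain m where m: "\<sigma> / of_real (2 * kF) = of_real m" and "m > 0"
    and "1 \<le> m * frob_sq (pinv M)"
    using gram_nonzero_eigenvalue_ge_inverse_frob_sq_pinv[of M "\<sigma> / of_real (2 * kF)"]
      \<open>\<sigma> \<noteq> 0\<close> \<open>kF > 0\<close> by auto
  moreover have "frob_sq (pinv M) < kF"
    using frob_sq_pinv_le_kappa_F[of M] \<open>kappa_F (slice_comb T a) < kF\<close> by (simp add: M_def)
  ultimately have "1 < m * kF"
    using mult_strict_left_mono[of "frob_sq (pinv M)" kF m] by linarith
  moreover have "\<sigma> = of_real (2 * kF * m)"
    using m \<open>kF > 0\<close> by (simp add: field_simps)
  moreover have "2 / real r \<le> 2"
    by (cases r) (simp_all add: divide_le_eq)
  ultimately show "\<sigma> \<in> \<real> \<and> 2 / real r \<le> Re \<sigma>"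
    by (simp add: mult.assoc mult.commute[of kF m])
qed

end
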